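(* Let $N \ge M \ge 1$ be integers, let $\mathcal{U}_r=\{r_1,\dots,r_N\}$ (robots) and $\mathcal{U}_g=\{g_1,\dots,g_M\}$ (goals), and let $\mathcal{F}=\{(i,j): i\in\{1,\dots,N\},\ j\in\{1,\dots,M\}\}$ be the edge set of the complete bipartite graph between them. For each edge $(i,j)\in\mathcal{F}$ let $C_{ij}$ be a real-valued integrable random variable (all defined on a common probability space, with arbitrary joint distribution). Let $\mathcal{O}\subset\mathcal{F}$ be an initial assignment such that every goal $j$ has exactly one $i$ with $(i,j)\in\mathcal{O}$, and every robot $i$ has at most one $j$ with $(i,j)\in\mathcal{O}$. Put $\mathcal{F}_{\mathcal{O}}=\mathcal{F}\setminus\mathcal{O}$ and define, for $\mathcal{A}\subseteq\mathcal{F}_{\mathcal{O}}$, $$J_{\mathcal{O}}(\mathcal{A})=\frac{1}{M}\sum_{j=1}^{M}\mathbb{E}\Big[\min\{C_{kj} : (k,j)\in\mathcal{A}\cup\mathcal{O}\}\Big].$$ Then $J_{\mathcal{O}}:2^{\mathcal{F}_{\mathcal{O}}}\to\mathbb{R}$ is monotone non-increasing and supermodular.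
   Context: A set function $J:2^{\mathcal{F}_{\mathcal{O}}}\to\mathbb{R}$ is monotone non-increasing if $J(\mathcal{A})\ge J(\mathcal{B})$ whenever $\mathcal{A}\subseteq\mathcal{B}\subseteq\mathcal{F}_{\mathcal{O}}$. The marginal decrease of $J$ at $\mathcal{A}$ with respect to $x\notin\mathcal{A}$ is $\Delta_J(x\mid\mathcal{A})=J(\mathcal{A})-J(\mathcal{A}\cup\{x\})$. $J$ is supermodular if for all $\mathcal{A}\subseteq\mathcal{B}\subseteq\mathcal{F}_{\mathcal{O}}$ and all $x\in\mathcal{F}_{\mathcal{O}}\setminus\mathcal{B}$ one has $\Delta_J(x\mid\mathcal{A})\ge\Delta_J(x\mid\mathcal{B})$. The quantity $\min\{C_{kj}:(k,j)\in\mathcal{A}\cup\mathcal{O}\}$ is the effective waiting time at goal $j$ (only the first-arriving robot serves the goal). *)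

theory Defs
  imports "HOL-Probability.Probability"
begin

definition edges :: "nat \<Rightarrow> nat \<Rightarrow> (nat \<times> nat) set" where
  "edges N M = {1..N} \<times> {1..M}"

definition valid_assignment :: "nat \<Rightarrow> nat \<Rightarrow> (nat \<times> nat) set \<Rightarrow> bool" where
  "valid_assignment N M Asg \<longleftrightarrow> Asg \<subseteq> edges N M \<and>
     (\<forall>j\<in>{1..M}. \<exists>!i. (i, j) \<in> Asg) \<and>
     (\<forall>i\<in>{1..N}. \<forall>j1 j2. (i, j1) \<in> Asg \<longrightarrow> (i, j2) \<in> Asg \<longrightarrow> j1 = j2)"

definition eff_wait :: "(nat \<Rightarrow> nat \<Rightarrow> 'a \<Rightarrow> real) \<Rightarrow> (nat \<times> nat) set \<Rightarrow> nat \<Rightarrow> 'a \<Rightarrow> real" where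
  "eff_wait C E j \<omega> = Min {C k j \<omega> | k. (k, j) \<in> E}"

definition J_O :: "'a measure \<Rightarrow> nat \<Rightarrow> (nat \<Rightarrow> nat \<Rightarrow> 'a \<Rightarrow> real) \<Rightarrow> (nat \<times> nat) set
    \<Rightarrow> (nat \<times> nat) set \<Rightarrow> real" where
  "J_O P M C Asg A = (1 / real M) * (\<Sum>j=1..M. integral\<^sup>L P (eff_wait C (A \<union> Asg) j))"

definition monotone_nonincreasing_on :: "'b set \<Rightarrow> ('b set \<Rightarrow> real) \<Rightarrow> bool" where
  "monotone_nonincreasing_on V J \<longleftrightarrow> (\<forall>A B. A \<subseteq> B \<and> B \<subseteq> V \<longrightarrow> J A \<ge> J B)"

definition marginal_decrease :: "('b set \<Rightarrow> real) \<Rightarrow> 'b \<Rightarrow> 'b set \<Rightarrow> real" where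
  "marginal_decrease J x A = J A - J (A \<union> {x})"

definition supermodular_on :: "'b set \<Rightarrow> ('b set \<Rightarrow> real) \<Rightarrow> bool" where
  "supermodular_on V J \<longleftrightarrow> (\<forall>A B x. A \<subseteq> B \<and> B \<subseteq> V \<and> x \<in> V - B \<longrightarrow>
      marginal_decrease J x A \<ge> marginal_decrease J x B)"

end

theory Submission
  imports Defs
begin

text \<open>Fix an outcome and a goal. The effective waiting time, the minimum cost over the
  edges of E at that goal, is antitone in E. Adding an edge of cost c to E, whose minimum
  is m, lowers it by \<open>m - min m c\<close>; since this is nondecreasing in m and m decreases as E
  grows, the decrease can only shrink. Both properties survive integration and averaging
  over the goals.\<close>

lemma integrable_Min_image:
  fixes f :: "'i \<Rightarrow> 'a \<Rightarrow> real"
  assumes "finite K" "K \<noteq> {}" "\<And>k. k \<in> K \<Longrightarrow> integrable P (f k)"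
  shows "integrable P (\<lambda>\<omega>. Min ((\<lambda>k. f k \<omega>) ` K))"
  using assms
proof (induction K rule: finite_ne_induct)
  case (singleton k)
  then show ?case by simp
next
  case (insert k K)
  then have "(\<lambda>\<omega>. Min ((\<lambda>k. f k \<omega>) ` insert k K)) = (\<lambda>\<omega>. min (f k \<omega>) (Min ((\<lambda>k. f k \<omega>) ` K)))"
    by simp
  with insert show ?case by simp
qed

lemma finite_column: "finite E \<Longrightarrow> finite {k. (k, j) \<in> E}"
  by (rule finite_subset[of _ "fst ` E"]) force+

lemma eff_wait_eq_Min_image: "eff_wait C E j \<omega> = Min ((\<lambda>k. C k j \<omega>) ` {k. (k, j) \<in> E})"
  unfolding eff_wait_def by (rule arg_cong[where f = Min]) blast

lemma integrable_eff_wait: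
  assumes "finite E" "\<exists>k. (k, j) \<in> E" "\<And>k. (k, j) \<in> E \<Longrightarrow> integrable P (C k j)"
  shows "integrable P (eff_wait C E j)"
  unfolding eff_wait_eq_Min_image using assms
  by (intro integrable_Min_image finite_column) auto

lemma eff_wait_antimono:
  assumes "E \<subseteq> E'" "finite E'" "\<exists>k. (k, j) \<in> E"
  shows "eff_wait C E' j \<omega> \<le> eff_wait C E j \<omega>"
  unfolding eff_wait_eq_Min_image using assms finite_column[OF \<open>finite E'\<close>]
  by (intro Min_antimono) auto

lemma eff_wait_Un:
  assumes "finite (E \<union> X)" "\<exists>k. (k, j) \<in> E" "\<exists>k. (k, j) \<in> X"
  shows "eff_wait C (E \<union> X) j \<omega> = min (eff_wait C E j \<omega>) (eff_wait C X j \<omega>)"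
proof -
  have "{k. (k, j) \<in> E \<union> X} = {k. (k, j) \<in> E} \<union> {k. (k, j) \<in> X}"
    by blast
  moreover have "finite {k. (k, j) \<in> E}" "finite {k. (k, j) \<in> X}"
    using assms(1) by (simp_all add: finite_column)
  ultimately show ?thesis
    unfolding eff_wait_eq_Min_image using assms(2,3) by (simp only: image_Un) (subst Min_Un; auto)
qed

lemma eff_wait_decrease_antimono:
  assumes "E \<subseteq> E'" "finite (E' \<union> X)" "\<exists>k. (k, j) \<in> E"
  shows "eff_wait C E' j \<omega> - eff_wait C (E' \<union> X) j \<omega> \<le> eff_wait C E j \<omega> - eff_wait C (E \<union> X) j \<omega>"
proof (cases "\<exists>k. (k, j) \<in> X")
  case True
  have "finite (E \<union> X)"
    using assms(1,2) finite_subset by auto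
  then have "eff_wait C (E \<union> X) j \<omega> = min (eff_wait C E j \<omega>) (eff_wait C X j \<omega>)"
    using assms(3) True by (rule eff_wait_Un)
  moreover have "eff_wait C (E' \<union> X) j \<omega> = min (eff_wait C E' j \<omega>) (eff_wait C X j \<omega>)"
    using assms True by (intro eff_wait_Un) auto
  moreover have "eff_wait C E' j \<omega> \<le> eff_wait C E j \<omega>"
    using assms by (intro eff_wait_antimono) auto
  ultimately show ?thesis
    by linarith
next
  case False
  then have "{k. (k, j) \<in> F \<union> X} = {k. (k, j) \<in> F}" for F
    by blast
  then show ?thesis
    unfolding eff_wait_eq_Min_image by simp
qed

lemma J_O_antimono:
  assumes "A \<subseteq> B" "finite (B \<union> Asg)"
    and "\<And>j. j \<in> {1..M} \<Longrightarrow> \<exists>k. (k, j) \<in> Asg"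
    and "\<And>k j. (k, j) \<in> B \<union> Asg \<Longrightarrow> integrable P (C k j)"
  shows "J_O P M C Asg B \<le> J_O P M C Asg A"
  unfolding J_O_def
proof (intro mult_left_mono sum_mono integral_mono)
  fix j assume "j \<in> {1..M}"
  with assms have "\<exists>k. (k, j) \<in> A \<union> Asg" "finite (A \<union> Asg)"
    using finite_subset by blast+
  with assms show "integrable P (eff_wait C (A \<union> Asg) j)" "integrable P (eff_wait C (B \<union> Asg) j)"
    and "eff_wait C (B \<union> Asg) j \<omega> \<le> eff_wait C (A \<union> Asg) j \<omega>" for \<omega>
    by (auto intro!: integrable_eff_wait eff_wait_antimono)
qed simp

lemma J_O_marginal_decrease_antimono:
  assumes "A \<subseteq> B" "finite (B \<union> {x} \<union> Asg)"
    and "\<And>j. j \<in> {1..M} \<Longrightarrow> \<exists>k. (k, j) \<in> Asg"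
    and "\<And>k j. (k, j) \<in> B \<union> {x} \<union> Asg \<Longrightarrow> integrable P (C k j)"
  shows "marginal_decrease (J_O P M C Asg) x B \<le> marginal_decrease (J_O P M C Asg) x A"
proof -
  let ?w = "\<lambda>E j. eff_wait C (E \<union> Asg) j"
  let ?d = "\<lambda>E j. (\<integral>\<omega>. ?w E j \<omega> \<partial>P) - (\<integral>\<omega>. ?w (E \<union> {x}) j \<omega> \<partial>P)"
  have "?d B j \<le> ?d A j" if "j \<in> {1..M}" for j
  proof -
    have "\<exists>k. (k, j) \<in> A \<union> Asg"
      using assms(3) that by blast
    moreover have "finite (E \<union> Asg)" if "E \<subseteq> B \<union> {x}" for E
      using assms(2) that finite_subset by auto
    ultimately have int: "integrable P (?w E j)" if "A \<subseteq> E" "E \<subseteq> B \<union> {x}" for E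
      using that assms(4) by (intro integrable_eff_wait) auto
    have intA: "integrable P (?w A j)" "integrable P (?w (A \<union> {x}) j)"
      and intB: "integrable P (?w B j)" "integrable P (?w (B \<union> {x}) j)"
      using assms(1) int[of A] int[of "A \<union> {x}"] int[of B] int[of "B \<union> {x}"] by auto
    have pointwise: "?w B j \<omega> - ?w (B \<union> {x}) j \<omega> \<le> ?w A j \<omega> - ?w (A \<union> {x}) j \<omega>" for \<omega>
    proof -
      have "E \<union> {x} \<union> Asg = E \<union> Asg \<union> {x}" for E
        by blast
      then show ?thesis
        using assms(1,2) \<open>\<exists>k. (k, j) \<in> A \<union> Asg\<close>
        by (simp only:) (rule eff_wait_decrease_antimono; blast)
    qed
    have "?d B j = (\<integral>\<omega>. ?w B j \<omega> - ?w (B \<union> {x}) j \<omega> \<partial>P)"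
      using intB by simp
    also have "\<dots> \<le> (\<integral>\<omega>. ?w A j \<omega> - ?w (A \<union> {x}) j \<omega> \<partial>P)"
      using intA intB pointwise by (intro integral_mono Bochner_Integration.integrable_diff)
    also have "\<dots> = ?d A j"
      using intA by simp
    finally show ?thesis .
  qed
  then show ?thesis
    unfolding marginal_decrease_def J_O_def right_diff_distrib[symmetric] sum_subtractf[symmetric]
    by (intro mult_left_mono sum_mono) auto
qed

theorem theorem1:
  fixes P :: "'a measure" and N M :: nat and C :: "nat \<Rightarrow> nat \<Rightarrow> 'a \<Rightarrow> real"
    and Asg :: "(nat \<times> nat) set"
  assumes "prob_space P"
    and "1 \<le> M" and "M \<le> N"
    and "\<And>i j. (i, j) \<in> edges N M \<Longrightarrow> integrable P (C i j)"
    and "valid_assignment N M Asg"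
  shows "monotone_nonincreasing_on (edges N M - Asg) (J_O P M C Asg)
       \<and> supermodular_on (edges N M - Asg) (J_O P M C Asg)"
proof -
  have Asg: "Asg \<subseteq> edges N M"
    using assms(5) unfolding valid_assignment_def by simp
  have cover: "\<exists>k. (k, j) \<in> Asg" if "j \<in> {1..M}" for j
    using assms(5) that unfolding valid_assignment_def by (meson ex1_implies_ex)
  have finite_edges_subset: "finite E" if "E \<subseteq> edges N M" for E
    using that by (rule finite_subset) (simp add: edges_def)
  show ?thesis
    unfolding monotone_nonincreasing_on_def supermodular_on_def
  proof (intro conjI allI impI)
    fix A B assume "A \<subseteq> B \<and> B \<subseteq> edges N M - Asg"
    with Asg show "J_O P M C Asg A \<ge> J_O P M C Asg B"
      by (intro J_O_antimono finite_edges_subset cover assms(4)) auto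
  next
    fix A B x assume "A \<subseteq> B \<and> B \<subseteq> edges N M - Asg \<and> x \<in> edges N M - Asg - B"
    with Asg show "marginal_decrease (J_O P M C Asg) x A \<ge> marginal_decrease (J_O P M C Asg) x B"
      by (intro J_O_marginal_decrease_antimono finite_edges_subset cover assms(4)) auto
  qed
qed

end
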